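(* Let $w$ be a linearly recurrent infinite word over a finite alphabet $\Sigma$. Suppose there exists a positive constant $C$ such that for every sufficiently large $n$ one has $\sum_{m\leq n}\mathit{ASF}_{w}(m)\geq Cn^2$. Then $w$ is abelian-square rich.
   Context: For a word $u$ and letter $a$, $|u|_a$ is the number of occurrences of $a$ in $u$; the Parikh vector of $u$ over $\Sigma=\{a_1,\dots,a_\sigma\}$ is $P(u)=(|u|_{a_1},\dots,|u|_{a_\sigma})$. An abelian square is a word $v_1v_2$ with $P(v_1)=P(v_2)$. For a finite or infinite word $w$, $\mathit{ASF}_w(m)$ denotes the number of distinct factors of $w$ of length $m$ that are abelian squares. The factor complexity $p_w(n)$ is the number of distinct factors of $w$ of length $n$. The recurrence index $R_w(n)$ is the least $m$ such that every factor of $w$ of length $m$ contains all factors of $w$ of length $n$; $w$ is uniformly recurrent if $R_w(n)$ is defined for all $n$, and linearly recurrent if moreover $R_w(n)/n$ is bounded. An infinite word $w$ is abelian-square rich if there is a positive constant $C$ such that for all sufficiently large $n$, $\frac{1}{p_w(n)}\sum_{v}(\text{number of distinct abelian square factors of } v)\geq Cn^2$, where the sum ranges over the factors $v$ of $w$ of length $n$. *)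

theory Defs
  imports Complex_Main
begin

definition parikh :: "'a list \<Rightarrow> ('a \<Rightarrow> nat)" where
  "parikh u = (\<lambda>a. count_list u a)"

definition abelian_square :: "'a list \<Rightarrow> bool" where
  "abelian_square u \<longleftrightarrow> (\<exists>v1 v2. u = v1 @ v2 \<and> parikh v1 = parikh v2)"

definition factor_at :: "(nat \<Rightarrow> 'a) \<Rightarrow> nat \<Rightarrow> nat \<Rightarrow> 'a list" where
  "factor_at w i n = map w [i..<i+n]"

definition factors_len :: "(nat \<Rightarrow> 'a) \<Rightarrow> nat \<Rightarrow> 'a list set" where
  "factors_len w n = {factor_at w i n | i. True}"

definition complexity :: "(nat \<Rightarrow> 'a) \<Rightarrow> nat \<Rightarrow> nat" where
  "complexity w n = card (factors_len w n)"

definition ASF :: "(nat \<Rightarrow> 'a) \<Rightarrow> nat \<Rightarrow> nat" where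
  "ASF w m = card {u \<in> factors_len w m. abelian_square u}"

definition list_factors :: "'a list \<Rightarrow> 'a list set" where
  "list_factors v = {u. \<exists>x y. v = x @ u @ y}"

definition num_ab_sq_factors :: "'a list \<Rightarrow> nat" where
  "num_ab_sq_factors v = card {u \<in> list_factors v. u \<noteq> [] \<and> abelian_square u}"

definition rec_window :: "(nat \<Rightarrow> 'a) \<Rightarrow> nat \<Rightarrow> nat \<Rightarrow> bool" where
  "rec_window w n m \<longleftrightarrow> (\<forall>i. factors_len w n \<subseteq> list_factors (factor_at w i m))"

definition recurrence_index :: "(nat \<Rightarrow> 'a) \<Rightarrow> nat \<Rightarrow> nat" where
  "recurrence_index w n = (LEAST m. rec_window w n m)"

definition uniformly_recurrent :: "(nat \<Rightarrow> 'a) \<Rightarrow> bool" where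
  "uniformly_recurrent w \<longleftrightarrow> (\<forall>n. \<exists>m. rec_window w n m)"

definition linearly_recurrent :: "(nat \<Rightarrow> 'a) \<Rightarrow> bool" where
  "linearly_recurrent w \<longleftrightarrow> uniformly_recurrent w \<and>
     (\<exists>K::real. \<forall>n>0. real (recurrence_index w n) / real n \<le> K)"

definition abelian_square_rich :: "(nat \<Rightarrow> 'a) \<Rightarrow> bool" where
  "abelian_square_rich w \<longleftrightarrow> (\<exists>C::real. C > 0 \<and>
     (\<forall>\<^sub>F n in sequentially.
        (1 / real (complexity w n)) * (\<Sum>v\<in>factors_len w n. real (num_ab_sq_factors v))
          \<ge> C * real n ^ 2))"

end

theory Submission
  imports Defs
begin

text \<open>If R(n) \<le> K n, every factor of w of length N contains all factors of w of
  length at most n = N div K. Abelian squares of different lengths are different words,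
  so each factor of length N has at least \<Sum>k=1..n ASF(k) \<ge> C n^2 - 1 nonempty abelian
  square factors, which is of order N^2 since N < 2 K n. A bound valid for every factor
  of length N is in particular valid for their average.\<close>

lemma length_factor_at [simp]: "length (factor_at w i n) = n"
  unfolding factor_at_def by simp

lemma factor_at_in_list_factors:
  assumes "k \<le> n" shows "factor_at w j k \<in> list_factors (factor_at w j n)"
proof -
  have "[j..<j+n] = [j..<j+k] @ [j+k..<j+n]"
    using assms upt_add_eq_append[of j "j+k" "n-k"] by simp
  then have "factor_at w j n = [] @ factor_at w j k @ map w [j+k..<j+n]"
    unfolding factor_at_def by simp
  then show ?thesis unfolding list_factors_def by blast
qed

lemma list_factors_trans:
  assumes "u \<in> list_factors v" "v \<in> list_factors x"
  shows "u \<in> list_factors x"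
proof -
  obtain a b c d where "v = a @ u @ b" "x = c @ v @ d"
    using assms unfolding list_factors_def by blast
  then have "x = (c @ a) @ u @ (b @ d)" by simp
  then show ?thesis unfolding list_factors_def by blast
qed

lemma finite_list_factors: "finite (list_factors (v :: 'a::finite list))"
proof (rule finite_subset)
  show "list_factors v \<subseteq> {xs. set xs \<subseteq> UNIV \<and> length xs \<le> length v}"
    unfolding list_factors_def by auto
qed (rule finite_lists_length_le[OF finite_UNIV])

lemma finite_factors_len: "finite (factors_len (w :: nat \<Rightarrow> 'a::finite) n)"
proof (rule finite_subset)
  show "factors_len w n \<subseteq> {xs. set xs \<subseteq> UNIV \<and> length xs \<le> n}"
    unfolding factors_len_def by auto
qed (rule finite_lists_length_le[OF finite_UNIV])

lemma complexity_pos: "complexity (w :: nat \<Rightarrow> 'a::finite) n > 0"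
  unfolding complexity_def using finite_factors_len[of w n]
  by (auto simp: card_gt_0_iff factors_len_def)

lemma ASF_0_le_1: "ASF w 0 \<le> 1"
proof -
  have "{u \<in> factors_len w 0. abelian_square u} \<subseteq> {[]}"
    unfolding factors_len_def factor_at_def by auto
  then have "ASF w 0 \<le> card {[] :: 'a list}"
    unfolding ASF_def by (intro card_mono) simp_all
  then show ?thesis by simp
qed

lemma rec_window_mono:
  assumes "rec_window w n m" "k \<le> n" "m \<le> N"
  shows "rec_window w k N"
  unfolding rec_window_def
proof (intro allI subsetI)
  fix i u assume "u \<in> factors_len w k"
  then obtain j where u: "u = factor_at w j k" unfolding factors_len_def by blast
  have "factor_at w j n \<in> list_factors (factor_at w i m)"
    using assms(1) unfolding rec_window_def factors_len_def by blast
  then show "u \<in> list_factors (factor_at w i N)"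
    using u assms(2,3) by (meson factor_at_in_list_factors list_factors_trans)
qed

lemma sum_ASF_le_num_ab_sq_factors:
  fixes w :: "nat \<Rightarrow> 'a::finite"
  assumes "rec_window w n N"
  shows "(\<Sum>k=1..n. ASF w k) \<le> num_ab_sq_factors (factor_at w i N)"
proof -
  define S where "S k = {u \<in> factors_len w k. abelian_square u}" for k
  have "finite (S k)" for k
    unfolding S_def using finite_factors_len[of w k] by simp
  moreover have "\<forall>k\<in>{1..n}. \<forall>l\<in>{1..n}. k \<noteq> l \<longrightarrow> S k \<inter> S l = {}"
    unfolding S_def factors_len_def by (auto dest: arg_cong[where f = length])
  ultimately have "(\<Sum>k=1..n. ASF w k) = card (\<Union>k\<in>{1..n}. S k)"
    unfolding ASF_def by (simp add: card_UN_disjoint S_def)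
  also have "\<dots> \<le> num_ab_sq_factors (factor_at w i N)"
    unfolding num_ab_sq_factors_def
  proof (rule card_mono)
    show "(\<Union>k\<in>{1..n}. S k) \<subseteq> {u \<in> list_factors (factor_at w i N). u \<noteq> [] \<and> abelian_square u}"
    proof
      fix u assume "u \<in> (\<Union>k\<in>{1..n}. S k)"
      then obtain k where k: "1 \<le> k" "k \<le> n" "u \<in> factors_len w k" "abelian_square u"
        unfolding S_def by auto
      then have "u \<in> list_factors (factor_at w i N)"
        using rec_window_mono[OF assms k(2) order_refl] unfolding rec_window_def by blast
      moreover have "length u = k" using k(3) unfolding factors_len_def by auto
      then have "u \<noteq> []" using k(1) by auto
      ultimately show "u \<in> {u \<in> list_factors (factor_at w i N). u \<noteq> [] \<and> abelian_square u}"
        using k by blast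
    qed
  qed (simp add: finite_list_factors)
  finally show ?thesis .
qed

lemma linearly_recurrentE:
  assumes "linearly_recurrent w"
  obtains K :: nat where "K \<ge> 1" "\<And>n. rec_window w n (K * n)"
proof -
  obtain K where K: "\<And>n. n > 0 \<Longrightarrow> real (recurrence_index w n) / real n \<le> K"
    and ur: "uniformly_recurrent w"
    using assms unfolding linearly_recurrent_def by blast
  define K' where "K' = nat \<lceil>max K 1\<rceil>"
  have "rec_window w n (K' * n)" for n
  proof (cases "n = 0")
    case True
    then show ?thesis by (simp add: rec_window_def factors_len_def list_factors_def factor_at_def)
  next
    case False
    have window: "rec_window w n (recurrence_index w n)"
      using ur unfolding uniformly_recurrent_def recurrence_index_def by (meson LeastI_ex)
    have "real (recurrence_index w n) \<le> K * real n"
      using K[of n] False by (simp add: divide_le_eq)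
    also have "\<dots> \<le> real K' * real n"
      unfolding K'_def by (intro mult_right_mono) linarith+
    finally have "recurrence_index w n \<le> K' * n" by (simp flip: of_nat_mult)
    then show ?thesis using rec_window_mono[OF window order_refl] by blast
  qed
  moreover have "K' \<ge> 1" unfolding K'_def by linarith
  ultimately show thesis using that[of K'] by blast
qed

lemma div_quadratic_bound:
  assumes "K \<ge> 1" "N div K \<ge> 1"
  shows "real N ^ 2 \<le> 4 * real K ^ 2 * real (N div K) ^ 2"
proof -
  have "N = K * (N div K) + N mod K" by simp
  moreover have "N mod K < K" using assms(1) by simp
  ultimately have "N < K * (N div K) + K" by linarith
  also have "\<dots> = K * (N div K + 1)" by simp
  also have "\<dots> \<le> 2 * K * (N div K)" using assms(2) by simp
  finally have "real N \<le> real (2 * K * (N div K))" by linarith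
  then have "real N \<le> 2 * real K * real (N div K)" by simp
  then have "real N ^ 2 \<le> (2 * real K * real (N div K)) ^ 2" by (rule power_mono) simp
  then show ?thesis by (simp add: power_mult_distrib)
qed

lemma num_ab_sq_factors_quadratic_lower_bound:
  fixes w :: "nat \<Rightarrow> 'a::finite"
  assumes "linearly_recurrent w"
    and C: "C > 0" "\<forall>\<^sub>F n in sequentially. (\<Sum>m\<le>n. real (ASF w m)) \<ge> C * real n ^ 2"
  obtains c where "c > 0"
    "\<forall>\<^sub>F N in sequentially. \<forall>i. real (num_ab_sq_factors (factor_at w i N)) \<ge> c * real N ^ 2"
proof -
  obtain K where K: "K \<ge> 1" "\<And>n. rec_window w n (K * n)"
    using linearly_recurrentE[OF assms(1)] by blast
  obtain N0 where N0: "\<And>n. n \<ge> N0 \<Longrightarrow> (\<Sum>m\<le>n. real (ASF w m)) \<ge> C * real n ^ 2"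
    using C(2) unfolding eventually_sequentially by blast
  define c where "c = C / (8 * real K ^ 2)"
  \<comment> \<open>then c N^2 \<le> C n^2 / 2, and the other half of C n^2 absorbs the -1 once c N^2 \<ge> 1\<close>
  have "c > 0" unfolding c_def using C K by simp
  have large_N: "\<forall>\<^sub>F N in sequentially. K * (N0 + 1) \<le> N \<and> 1 \<le> c * real N ^ 2"
  proof -
    have "filterlim (\<lambda>N. c * real N ^ 2) at_top sequentially"
      using \<open>c > 0\<close> by (intro filterlim_tendsto_pos_mult_at_top[OF tendsto_const])
         (auto intro!: filterlim_pow_at_top filterlim_real_sequentially)
    then show ?thesis
      by (intro eventually_conj eventually_ge_at_top) (simp add: filterlim_at_top)
  qed
  have bound: "real (num_ab_sq_factors (factor_at w i N)) \<ge> c * real N ^ 2"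
    if N: "K * (N0 + 1) \<le> N" "1 \<le> c * real N ^ 2" for N i
  proof -
    define n where "n = N div K"
    have "N0 + 1 \<le> n"
      unfolding n_def using div_le_mono[OF N(1), of K] K(1) by simp
    have "K * n \<le> N" unfolding n_def by simp
    have "real N ^ 2 \<le> 4 * real K ^ 2 * real n ^ 2"
      using div_quadratic_bound[OF K(1), of N] \<open>N0 + 1 \<le> n\<close> unfolding n_def by simp
    then have "2 * c * real N ^ 2 \<le> 2 * c * (4 * real K ^ 2 * real n ^ 2)"
      using \<open>c > 0\<close> by (intro mult_left_mono) simp_all
    also have "\<dots> = C * real n ^ 2"
      unfolding c_def using K(1) by simp
    finally have "2 * c * real N ^ 2 \<le> C * real n ^ 2" .
    have "{..n} = insert 0 {1..n}" by auto
    then have "C * real n ^ 2 - 1 \<le> (\<Sum>k=1..n. real (ASF w k))"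
      using N0[of n] \<open>N0 + 1 \<le> n\<close> ASF_0_le_1[of w] by simp
    also have "\<dots> = real (\<Sum>k=1..n. ASF w k)" by simp
    also have "\<dots> \<le> real (num_ab_sq_factors (factor_at w i N))"
      using sum_ASF_le_num_ab_sq_factors[OF rec_window_mono[OF K(2) order_refl \<open>K * n \<le> N\<close>]]
      by (rule of_nat_mono)
    finally show ?thesis using \<open>2 * c * real N ^ 2 \<le> C * real n ^ 2\<close> N(2) by linarith
  qed
  from large_N have "\<forall>\<^sub>F N in sequentially. \<forall>i. real (num_ab_sq_factors (factor_at w i N)) \<ge> c * real N ^ 2"
    by (rule eventually_mono) (blast intro: bound)
  with \<open>c > 0\<close> show thesis by (rule that)
qed

lemma abelian_square_richI:
  fixes w :: "nat \<Rightarrow> 'a::finite"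
  assumes "c > 0"
    and "\<forall>\<^sub>F N in sequentially. \<forall>i. real (num_ab_sq_factors (factor_at w i N)) \<ge> c * real N ^ 2"
  shows "abelian_square_rich w"
  unfolding abelian_square_rich_def
proof (intro exI conjI)
  show "\<forall>\<^sub>F N in sequentially.
          1 / real (complexity w N) * (\<Sum>v\<in>factors_len w N. real (num_ab_sq_factors v)) \<ge> c * real N ^ 2"
  proof (rule eventually_mono[OF assms(2)])
    fix N assume bound: "\<forall>i. real (num_ab_sq_factors (factor_at w i N)) \<ge> c * real N ^ 2"
    have "(\<Sum>v\<in>factors_len w N. c * real N ^ 2) \<le> (\<Sum>v\<in>factors_len w N. real (num_ab_sq_factors v))"
      by (rule sum_mono) (use bound in \<open>auto simp: factors_len_def\<close>)
    then have "real (complexity w N) * (c * real N ^ 2) \<le> (\<Sum>v\<in>factors_len w N. real (num_ab_sq_factors v))"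
      unfolding complexity_def by simp
    then show "1 / real (complexity w N) * (\<Sum>v\<in>factors_len w N. real (num_ab_sq_factors v)) \<ge> c * real N ^ 2"
      using complexity_pos[of w N] by (simp add: field_simps)
  qed
qed (rule assms(1))

theorem lemma1:
  fixes w :: "nat \<Rightarrow> 'a::finite"
  assumes "linearly_recurrent w"
    and "\<exists>C::real. C > 0 \<and>
           (\<forall>\<^sub>F n in sequentially. (\<Sum>m\<le>n. real (ASF w m)) \<ge> C * real n ^ 2)"
  shows "abelian_square_rich w"
proof -
  obtain C :: real where C: "C > 0" "\<forall>\<^sub>F n in sequentially. (\<Sum>m\<le>n. real (ASF w m)) \<ge> C * real n ^ 2"
    using assms(2) by blast
  obtain c where "c > 0"
    "\<forall>\<^sub>F N in sequentially. \<forall>i. real (num_ab_sq_factors (factor_at w i N)) \<ge> c * real N ^ 2"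
    using num_ab_sq_factors_quadratic_lower_bound[OF assms(1) C] by blast
  then show ?thesis by (rule abelian_square_richI)
qed

end
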